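(* Let $A\in\mathbb{R}^{n\times d}$ with largest singular value $\sigma_1$, $S\in\mathbb{R}^{d\times m}$, $\lambda>0$, and let $f:\mathbb{R}^n\to\mathbb{R}$ be convex, differentiable and $L$-Lipschitz (its gradient is not assumed Lipschitz). Let $x^*$ be the unique minimizer of $x\mapsto f(Ax)+\frac{\lambda}{2}\|x\|_2^2$, let $\alpha^*$ be any minimizer of $\alpha\mapsto f(AS\alpha)+\frac{\lambda}{2}\|S\alpha\|_2^2$, and set $\widetilde{x}=-\frac{1}{\lambda}A^\top\nabla f(AS\alpha^* )$. Then $$\|\widetilde{x}-x^*\|_2\le\frac{6L}{\lambda}\sqrt{\sigma_1 Z_f}.$$
   Context: $f^*(z)=\sup_w\{w^\top z-f(w)\}$ is the Fenchel conjugate of $f$ with domain $\mathrm{dom} f^*$. $z^*=\nabla f(Ax^* )$. $P_S=S(S^\top S)^\dagger S^\top$, $P_S^\perp=I_d-P_S$, and $Z_f=Z_f(A,S)=\sup_{\Delta\in(\mathrm{dom} f^*-z^* ),\,\Delta\ne0}\left(\frac{\Delta^\top AP_S^\perp A^\top\Delta}{\|\Delta\|_2^2}\right)^{1/2}$. *)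

theory Defs
  imports "HOL-Analysis.Analysis"
begin

definition fenchel_dom :: "('a::real_inner \<Rightarrow> real) \<Rightarrow> 'a set" where
  "fenchel_dom f = {z. bdd_above (range (\<lambda>w. inner w z - f w))}"

definition pinv :: "real^'n^'m \<Rightarrow> real^'m^'n" where
  "pinv M = (THE X. M ** X ** M = M \<and> X ** M ** X = X \<and>
      transpose (M ** X) = M ** X \<and> transpose (X ** M) = X ** M)"

definition proj_mat :: "real^'m^'d \<Rightarrow> real^'d^'d" where
  "proj_mat S = S ** pinv (transpose S ** S) ** transpose S"

definition proj_perp :: "real^'m^'d \<Rightarrow> real^'d^'d" where
  "proj_perp S = mat 1 - proj_mat S"

text \<open>Z_f(A,S); the supremum over an empty index set is taken to be 0
  (all values are nonnegative, so inserting 0 does not change a nonempty sup).\<close>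
definition Zf :: "(real^'n \<Rightarrow> real) \<Rightarrow> real^'n \<Rightarrow> real^'d^'n \<Rightarrow> real^'m^'d \<Rightarrow> real" where
  "Zf f zs A S = Sup (insert 0
     ((\<lambda>\<Delta>. sqrt ((transpose A *v \<Delta>) \<bullet> (proj_perp S *v (transpose A *v \<Delta>)) / (norm \<Delta>)^2))
       ` {\<Delta>. \<Delta> \<in> (\<lambda>z. z - zs) ` fenchel_dom f \<and> \<Delta> \<noteq> 0}))"

end

theory Submission
  imports Defs
begin

text \<open>Write z0 = grad f (A x*), z1 = grad f (A S alpha*) and w = A^T (z1 - z0). Stationarity of
  the full problem gives x* = -A^T z0 / lambda, so the error of the sketched dual estimate is
  exactly -w / lambda; stationarity of the sketched problem makes r = A^T z1 + lambda S alpha*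
  orthogonal to the range of S, and r is shorter than A^T z1. Monotonicity of grad f, applied to
  lambda (S alpha* - x*) = r - w, gives
  |w|^2 <= <w, r> = <P_S^perp w, r> <= |P_S^perp w| |A^T z1|.
  Gradients of a convex L-Lipschitz function have norm at most L and lie in dom f*, so the
  definition of Z_f bounds |P_S^perp w| by 2 L Z_f, while |A^T z1| <= sigma_1 L; hence
  |w|^2 <= 2 sigma_1 Z_f L^2.\<close>

lemma convex_on_ge_tangent:
  fixes f :: "'a::real_inner \<Rightarrow> real"
  assumes cv: "convex_on UNIV f" and d: "(f has_derivative (\<lambda>h. g \<bullet> h)) (at a)"
  shows "f a + g \<bullet> (b - a) \<le> f b"
proof -
  define \<phi> where "\<phi> t = f (a + t *\<^sub>R (b - a))" for t :: real
  have "convex_on UNIV \<phi>"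
  proof (rule convex_onI)
    fix t x y :: real assume "0 < t" "t < 1"
    have "\<phi> ((1 - t) * x + t * y) = f ((1 - t) *\<^sub>R (a + x *\<^sub>R (b - a)) + t *\<^sub>R (a + y *\<^sub>R (b - a)))"
      unfolding \<phi>_def by (simp add: algebra_simps)
    also have "\<dots> \<le> (1 - t) * \<phi> x + t * \<phi> y"
      unfolding \<phi>_def using cv \<open>0 < t\<close> \<open>t < 1\<close> by (intro convex_onD) auto
    finally show "\<phi> ((1 - t) *\<^sub>R x + t *\<^sub>R y) \<le> (1 - t) * \<phi> x + t * \<phi> y" by simp
  qed simp
  moreover have "(\<phi> has_field_derivative (g \<bullet> (b - a))) (at 0)"
  proof -
    have "((\<lambda>t. a + t *\<^sub>R (b - a)) has_derivative (\<lambda>t. t *\<^sub>R (b - a))) (at 0)"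
      by (auto intro!: derivative_eq_intros)
    from has_derivative_compose[OF this, of f "\<lambda>h. g \<bullet> h"] d
    show ?thesis unfolding \<phi>_def by (simp add: has_field_derivative_def mult_commute_abs)
  qed
  ultimately have "\<phi> 1 - \<phi> 0 \<ge> g \<bullet> (b - a) * (1 - 0)"
    by (intro convex_on_imp_above_tangent) auto
  then show ?thesis unfolding \<phi>_def by simp
qed

lemma convex_on_gradient_monotone:
  fixes f :: "'a::real_inner \<Rightarrow> real"
  assumes "convex_on UNIV f"
    and "(f has_derivative (\<lambda>h. g \<bullet> h)) (at a)" "(f has_derivative (\<lambda>h. g' \<bullet> h)) (at b)"
  shows "(g - g') \<bullet> (a - b) \<ge> 0"
  using convex_on_ge_tangent[OF assms(1,2), of b] convex_on_ge_tangent[OF assms(1,3), of a]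
  by (simp add: inner_diff_left inner_diff_right inner_commute)

lemma convex_on_gradient_norm_le_lipschitz:
  fixes f :: "'a::real_inner \<Rightarrow> real"
  assumes cv: "convex_on UNIV f" and d: "(f has_derivative (\<lambda>h. g \<bullet> h)) (at a)"
    and lip: "L-lipschitz_on UNIV f"
  shows "norm g \<le> L"
proof -
  have "f a + g \<bullet> g \<le> f (a + g)" using convex_on_ge_tangent[OF cv d, of "a + g"] by simp
  moreover have "dist (f (a + g)) (f a) \<le> L * dist (a + g) a"
    using lip by (auto simp: lipschitz_on_def)
  ultimately have "norm g * norm g \<le> L * norm g"
    by (auto simp: dist_real_def dist_norm power2_norm_eq_inner[symmetric] power2_eq_square)
  moreover have "L \<ge> 0" using lip by (auto simp: lipschitz_on_def)
  ultimately show ?thesis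
    by (cases "norm g = 0") (auto simp: mult_le_cancel_right)
qed

lemma convex_on_gradient_in_fenchel_dom:
  fixes f :: "'a::real_inner \<Rightarrow> real"
  assumes "convex_on UNIV f" and "(f has_derivative (\<lambda>h. g \<bullet> h)) (at a)"
  shows "g \<in> fenchel_dom f"
  unfolding fenchel_dom_def
proof (intro CollectI bdd_aboveI2)
  fix w
  have "f a + g \<bullet> (w - a) \<le> f w" by (rule convex_on_ge_tangent[OF assms])
  then show "w \<bullet> g - f w \<le> a \<bullet> g - f a" by (simp add: inner_diff_right inner_commute)
qed

lemma norm_transpose_mult_le_onorm:
  fixes A :: "real^'d^'n"
  shows "norm (transpose A *v z) \<le> onorm (\<lambda>x. A *v x) * norm z"
proof -
  let ?y = "transpose A *v z"
  have "norm ?y * norm ?y = z \<bullet> (A *v ?y)"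
    by (simp add: power2_eq_square[symmetric] power2_norm_eq_inner dot_lmul_matrix)
  also have "\<dots> \<le> norm z * norm (A *v ?y)" by (rule Cauchy_Schwarz_ineq2[THEN abs_le_D1])
  also have "\<dots> \<le> (onorm (\<lambda>x. A *v x) * norm z) * norm ?y"
    using onorm[of "\<lambda>x. A *v x" ?y] by (simp add: mult_left_mono algebra_simps)
  finally show ?thesis
    by (cases "norm ?y = 0") (auto simp: onorm_pos_le mult_le_cancel_right)
qed

definition penrose :: "real^'n^'m \<Rightarrow> real^'m^'n \<Rightarrow> bool" where
  "penrose M X \<longleftrightarrow> M ** X ** M = M \<and> X ** M ** X = X \<and>
      transpose (M ** X) = M ** X \<and> transpose (X ** M) = X ** M"

lemma pinv_eq_The_penrose: "pinv M = (THE X. penrose M X)"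
  by (simp add: pinv_def penrose_def)

lemma penrose_unique:
  assumes "penrose M X" "penrose M Y" shows "X = Y"
proof -
  from assms have a1: "M ** X ** M = M" and a2: "X ** M ** X = X" and a3: "transpose (M ** X) = M ** X"
    and a4: "transpose (X ** M) = X ** M" and b1: "M ** Y ** M = M" and b2: "Y ** M ** Y = Y"
    and b3: "transpose (M ** Y) = M ** Y" and b4: "transpose (Y ** M) = Y ** M"
    by (auto simp: penrose_def)
  have tM1: "transpose M = transpose M ** (M ** Y)"
    by (metis b1 b3 matrix_transpose_mul)
  have tM2: "transpose M = X ** M ** transpose M"
    by (metis a1 a4 matrix_mul_assoc matrix_transpose_mul)
  have "X = X ** transpose (M ** X)" using a2 a3 by (simp add: matrix_mul_assoc)
  also have "\<dots> = X ** (transpose X ** (transpose M ** (M ** Y)))"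
    using tM1 by (simp add: matrix_transpose_mul)
  also have "\<dots> = X ** transpose (M ** X) ** M ** Y"
    by (simp add: matrix_mul_assoc matrix_transpose_mul)
  also have "\<dots> = X ** M ** Y" using a2 a3 by (simp add: matrix_mul_assoc)
  finally have x: "X = X ** M ** Y" .
  have "Y = transpose (Y ** M) ** Y" using b2 b4 by simp
  also have "\<dots> = X ** M ** (transpose M ** transpose Y) ** Y"
    using tM2 by (simp add: matrix_transpose_mul matrix_mul_assoc)
  also have "\<dots> = X ** M ** (Y ** M ** Y)"
    using b4 by (simp add: matrix_mul_assoc flip: matrix_transpose_mul)
  also have "\<dots> = X ** M ** Y" using b2 by simp
  finally show ?thesis using x by simp
qed

lemma penrose_transpose:
  assumes "penrose M X"
  shows "penrose (transpose M) (transpose X)"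
proof -
  have "transpose M ** transpose X ** transpose M = transpose (M ** X ** M)"
    and "transpose X ** transpose M ** transpose X = transpose (X ** M ** X)"
    by (simp_all add: matrix_transpose_mul matrix_mul_assoc)
  moreover have "transpose M ** transpose X = transpose (X ** M)"
    and "transpose X ** transpose M = transpose (M ** X)"
    by (simp_all add: matrix_transpose_mul)
  ultimately show ?thesis using assms by (simp add: penrose_def)
qed

lemma transpose_eq_of_inner:
  fixes K :: "real^'n^'n"
  assumes "\<And>x y. (K *v x) \<bullet> y = x \<bullet> (K *v y)"
  shows "transpose K = K"
proof -
  have "transpose K *v x = K *v x" for x
  proof -
    have "(x v* K) \<bullet> y = (K *v x) \<bullet> y" for y using assms dot_lmul_matrix by metis
    then have "(x v* K - K *v x) \<bullet> (x v* K - K *v x) = 0" by (simp add: inner_diff_left)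
    then show ?thesis by simp
  qed
  then show ?thesis by (simp add: matrix_eq)
qed

lemma orthogonal_projection_exists:
  fixes V :: "'a::euclidean_space set"
  assumes "subspace V"
  obtains p where "linear p" "\<And>y. p y \<in> V" "\<And>x y. x \<in> V \<Longrightarrow> orthogonal x (y - p y)"
    "\<And>v. v \<in> V \<Longrightarrow> p v = v" "\<And>x y. p x \<bullet> y = x \<bullet> p y"
proof -
  obtain B where "B \<subseteq> V" "pairwise orthogonal B" "span B = V"
    using orthogonal_basis_subspace[OF assms] by metis
  define p where "p y = (\<Sum>b\<in>B. (b \<bullet> y / (b \<bullet> b)) *\<^sub>R b)" for y
  have "linear p"
    unfolding p_def[abs_def]
    by (intro linear_compose_sum ballI linearI) (simp_all add: inner_add_right add_divide_distrib scaleR_add_left)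
  moreover have pV: "p y \<in> V" for y
    unfolding p_def using \<open>B \<subseteq> V\<close> assms by (intro subspace_sum subspace_scale) auto
  moreover have orth: "orthogonal x (y - p y)" if "x \<in> V" for x y
    unfolding p_def using Gram_Schmidt_step \<open>pairwise orthogonal B\<close> \<open>span B = V\<close> that by blast
  moreover have "p v = v" if "v \<in> V" for v
    using orth[of "v - p v" v] that pV assms by (simp add: subspace_diff orthogonal_def)
  moreover have "p x \<bullet> y = x \<bullet> p y" for x y
  proof -
    have "p x \<bullet> (y - p y) = 0" "p y \<bullet> (x - p x) = 0"
      using orth pV by (auto simp: orthogonal_def)
    then show ?thesis by (simp add: inner_diff_right inner_commute)
  qed
  ultimately show thesis using that by blast
qed

lemma penrose_matrixI:
  fixes M :: "real^'n^'n"
  assumes "linear q"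
    and Mq: "\<And>y. M *v q y = p y" and qM: "\<And>x. q (M *v x) = p x"
    and pM: "\<And>x. p (M *v x) = M *v x" and qp: "\<And>y. q (p y) = q y"
    and psym: "\<And>x y. p x \<bullet> y = x \<bullet> p y"
  shows "penrose M (matrix q)"
proof -
  have Xq: "matrix q *v y = q y" for y
    using \<open>linear q\<close> by (simp add: matrix_works)
  have "M ** matrix q ** M = M"
    by (simp add: matrix_eq matrix_vector_mul_assoc[symmetric] Xq Mq pM)
  moreover have "matrix q ** M ** matrix q = matrix q"
    by (simp add: matrix_eq matrix_vector_mul_assoc[symmetric] Xq Mq qp)
  moreover have "transpose (M ** matrix q) = M ** matrix q"
    by (rule transpose_eq_of_inner) (simp add: matrix_vector_mul_assoc[symmetric] Xq Mq psym)
  moreover have "transpose (matrix q ** M) = matrix q ** M"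
    by (rule transpose_eq_of_inner) (simp add: matrix_vector_mul_assoc[symmetric] Xq qM psym)
  ultimately show ?thesis unfolding penrose_def by blast
qed

text \<open>For symmetric M the pseudo-inverse inverts M on its range V and vanishes on the
  orthogonal complement of V, which is the kernel of M.\<close>
lemma penrose_exists_symmetric:
  fixes M :: "real^'n^'n"
  assumes "transpose M = M"
  obtains X where "penrose M X"
proof -
  have Msym: "(M *v x) \<bullet> y = x \<bullet> (M *v y)" for x y
    by (metis dot_lmul_matrix assms transpose_matrix_vector)
  define V where "V = range (\<lambda>x. M *v x)"
  have subV: "subspace V"
    unfolding V_def by (rule linear_subspace_image) (auto intro: subspace_UNIV)
  obtain p where lp: "linear p" and pV: "\<And>y. p y \<in> V"
    and porth: "\<And>x y. x \<in> V \<Longrightarrow> orthogonal x (y - p y)"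
    and pid: "\<And>v. v \<in> V \<Longrightarrow> p v = v" and psym: "\<And>x y. p x \<bullet> y = x \<bullet> p y"
    using orthogonal_projection_exists[OF subV] by metis
  have Mp: "M *v p y = M *v y" for y
  proof -
    have "(M *v (y - p y)) \<bullet> (M *v (y - p y)) = 0"
      using Msym porth[of "M *v (M *v (y - p y))" y] by (simp add: V_def orthogonal_def inner_commute)
    then show ?thesis by (simp add: matrix_vector_mult_diff_distrib)
  qed
  have "inj_on (\<lambda>x. M *v x) V"
  proof (subst linear_inj_on_iff_eq_0[OF matrix_vector_mul_linear subV], intro ballI impI)
    fix x assume "x \<in> V" "M *v x = 0"
    then obtain z where "x = M *v z" unfolding V_def by blast
    then have "x \<bullet> x = z \<bullet> (M *v x)" using Msym by metis
    then show "x = 0" using \<open>M *v x = 0\<close> by simp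
  qed
  then obtain g where lg: "linear g" and gM: "\<And>v. v \<in> V \<Longrightarrow> g (M *v v) = v"
    using linear_exists_left_inverse_on[OF matrix_vector_mul_linear subV] by metis
  have pM: "p (M *v x) = M *v x" for x
    using pid by (simp add: V_def)
  show thesis
  proof (rule that, rule penrose_matrixI[where q = "g \<circ> p" and p = p])
    show "linear (g \<circ> p)" using lp lg by (rule linear_compose)
    show "M *v (g \<circ> p) y = p y" for y
    proof -
      obtain z where z: "p y = M *v z" using pV[of y] unfolding V_def by blast
      then have "g (p y) = p z" using gM[OF pV[of z]] Mp[of z] by simp
      then show ?thesis using Mp z by simp
    qed
    show "(g \<circ> p) (M *v x) = p x" for x
      using gM[OF pV[of x]] Mp[of x] pM by simp
  qed (use pM pid pV psym in simp_all)
qed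

lemma penrose_pinv_symmetric:
  fixes M :: "real^'n^'n"
  assumes "transpose M = M"
  shows "penrose M (pinv M)" and "transpose (pinv M) = pinv M"
proof -
  obtain X where "penrose M X" using penrose_exists_symmetric[OF assms] .
  then have "\<exists>!X. penrose M X" using penrose_unique by blast
  then show pen: "penrose M (pinv M)" unfolding pinv_eq_The_penrose by (rule theI')
  show "transpose (pinv M) = pinv M"
    using penrose_unique[OF penrose_transpose[OF pen]] pen assms by simp
qed

lemma matrix_vector_mult_eq_0_of_gram:
  fixes S :: "real^'m^'d"
  assumes "(transpose S ** S) *v v = 0"
  shows "S *v v = 0"
proof -
  have "(S *v v) \<bullet> (S *v v) = v \<bullet> ((transpose S ** S) *v v)"
    by (metis dot_lmul_matrix matrix_vector_mul_assoc transpose_transpose transpose_matrix_vector)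
  then show ?thesis using assms by simp
qed

lemma gram_pinv_transpose:
  fixes S :: "real^'m^'d"
  shows "transpose S ** S ** pinv (transpose S ** S) ** transpose S = transpose S"
proof -
  define M where "M = transpose S ** S"
  define X where "X = pinv M"
  have sM: "transpose M = M" unfolding M_def by (simp add: matrix_transpose_mul)
  have MXM: "M ** X ** M = M" and XT: "transpose X = X"
    using penrose_pinv_symmetric[OF sM] unfolding X_def penrose_def by blast+
  have "S ** X ** M = S"
  proof (subst matrix_eq, intro allI)
    fix z
    have "M *v (X *v (M *v z) - z) = 0"
      using MXM by (simp add: matrix_vector_mult_diff_distrib matrix_vector_mul_assoc matrix_mul_assoc)
    then have "S *v (X *v (M *v z) - z) = 0"
      unfolding M_def by (rule matrix_vector_mult_eq_0_of_gram)
    then show "(S ** X ** M) *v z = S *v z"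
      by (simp add: matrix_vector_mult_diff_distrib matrix_vector_mul_assoc matrix_mul_assoc)
  qed
  then have "transpose (S ** X ** M) = transpose S" by simp
  then have "M ** X ** transpose S = transpose S"
    by (simp add: matrix_transpose_mul matrix_mul_assoc sM XT)
  then show ?thesis unfolding M_def X_def .
qed

lemma proj_perp_eq: "proj_perp S *v w = w - S *v (pinv (transpose S ** S) *v (transpose S *v w))"
  by (simp add: proj_perp_def proj_mat_def matrix_vector_mult_diff_rdistrib matrix_vector_mul_assoc
      matrix_mul_assoc del: transpose_matrix_vector)

lemma proj_perp_decomp: "\<exists>y. w = S *v y + proj_perp S *v w"
  by (auto simp: proj_perp_eq)

lemma orthogonal_range_proj_perp: "(S *v y) \<bullet> (proj_perp S *v w) = 0"
proof -
  have "transpose S *v (proj_perp S *v w)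
      = transpose S *v w - (transpose S ** S ** pinv (transpose S ** S) ** transpose S) *v w"
    by (simp only: proj_perp_eq matrix_vector_mult_diff_distrib matrix_vector_mul_assoc matrix_mul_assoc)
  then have "transpose S *v (proj_perp S *v w) = 0"
    by (simp only: gram_pinv_transpose diff_self)
  then show ?thesis using dot_lmul_matrix[of y "transpose S" "proj_perp S *v w"] by simp
qed

lemma inner_proj_perp_self: "w \<bullet> (proj_perp S *v w) = (norm (proj_perp S *v w))^2"
  and norm_proj_perp_le: "norm (proj_perp S *v w) \<le> norm w"
proof -
  define p where "p = proj_perp S *v w"
  obtain y where w: "w = S *v y + p" using proj_perp_decomp unfolding p_def by blast
  have o: "(S *v y) \<bullet> p = 0" unfolding p_def by (rule orthogonal_range_proj_perp)
  have "w \<bullet> p = (norm p)^2"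
    using w o by (simp add: inner_add_left power2_norm_eq_inner)
  then show "w \<bullet> (proj_perp S *v w) = (norm (proj_perp S *v w))^2" by (simp add: p_def)
  have "(norm w)^2 = (norm (S *v y))^2 + (norm p)^2"
    using norm_add_Pythagorean[of "S *v y" p] w o by (simp add: orthogonal_def)
  then have "(norm p)^2 \<le> (norm w)^2" by simp
  then have "norm p \<le> norm w" by (rule power2_le_imp_le) simp
  then show "norm (proj_perp S *v w) \<le> norm w" by (simp add: p_def)
qed

lemma Zf_eq_Sup_ratios:
  "Zf f zs A S = Sup (insert 0 ((\<lambda>\<Delta>. norm (proj_perp S *v (transpose A *v \<Delta>)) / norm \<Delta>)
     ` {\<Delta>. \<Delta> \<in> (\<lambda>z. z - zs) ` fenchel_dom f \<and> \<Delta> \<noteq> 0}))"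
  unfolding Zf_def
  by (intro arg_cong[where f = "\<lambda>X. Sup (insert 0 X)"] image_cong refl)
     (simp add: inner_proj_perp_self real_sqrt_divide)

lemma bdd_above_proj_perp_ratios:
  fixes A :: "real^'d^'n"
  shows "bdd_above (insert 0 ((\<lambda>\<Delta>. norm (proj_perp S *v (transpose A *v \<Delta>)) / norm \<Delta>) ` D))"
proof (rule bdd_aboveI[where M = "onorm (\<lambda>x. A *v x)"])
  have "norm (proj_perp S *v (transpose A *v \<Delta>)) / norm \<Delta> \<le> onorm (\<lambda>x. A *v x)" for \<Delta>
    using order_trans[OF norm_proj_perp_le norm_transpose_mult_le_onorm]
    by (cases "\<Delta> = 0") (simp_all add: divide_le_eq onorm_pos_le)
  then show "x \<le> onorm (\<lambda>x. A *v x)"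
    if "x \<in> insert 0 ((\<lambda>\<Delta>. norm (proj_perp S *v (transpose A *v \<Delta>)) / norm \<Delta>) ` D)" for x
    using that by (auto simp: onorm_pos_le)
qed

lemma Zf_nonneg: "Zf f zs A S \<ge> 0"
  unfolding Zf_eq_Sup_ratios by (rule cSup_upper[OF insertI1 bdd_above_proj_perp_ratios])

lemma norm_proj_perp_le_Zf:
  assumes "z \<in> fenchel_dom f"
  shows "norm (proj_perp S *v (transpose A *v (z - zs))) \<le> Zf f zs A S * norm (z - zs)"
proof (cases "z = zs")
  case False
  then have "norm (proj_perp S *v (transpose A *v (z - zs))) / norm (z - zs) \<le> Zf f zs A S"
    unfolding Zf_eq_Sup_ratios using assms
    by (intro cSup_upper bdd_above_proj_perp_ratios) auto
  with False show ?thesis by (simp add: divide_le_eq mult.commute)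
qed simp

lemma regularized_composite_stationary:
  fixes A :: "real^'d^'n" and T :: "real^'k^'d" and f :: "real^'n \<Rightarrow> real"
  assumes grad: "\<And>y. (f has_derivative (\<lambda>h. gradf y \<bullet> h)) (at y)"
    and min: "\<And>b. f (A *v (T *v a)) + lam / 2 * (norm (T *v a))^2
                  \<le> f (A *v (T *v b)) + lam / 2 * (norm (T *v b))^2"
  shows "(transpose A *v gradf (A *v (T *v a)) + lam *\<^sub>R (T *v a)) \<bullet> (T *v h) = 0"
proof -
  let ?y = "A *v (T *v a)"
  have "((\<lambda>x. A *v (T *v x)) has_derivative (\<lambda>x. A *v (T *v x))) (at a)"
    by (intro bounded_linear_imp_has_derivative
        bounded_linear_compose[OF matrix_vector_mul_bounded_linear matrix_vector_mul_bounded_linear])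
  from has_derivative_compose[OF this grad]
  have df: "((\<lambda>x. f (A *v (T *v x))) has_derivative (\<lambda>h. gradf ?y \<bullet> (A *v (T *v h)))) (at a)" .
  have "((\<lambda>x. T *v x) has_derivative (\<lambda>x. T *v x)) (at a)"
    by (rule bounded_linear_imp_has_derivative) simp
  from has_derivative_compose[OF this has_derivative_sqnorm_at]
  have dn: "((\<lambda>x. (norm (T *v x))^2) has_derivative (\<lambda>h. 2 *\<^sub>R ((T *v a) \<bullet> (T *v h)))) (at a)" .
  have "(\<lambda>h. gradf ?y \<bullet> (A *v (T *v h)) + lam / 2 * (2 *\<^sub>R ((T *v a) \<bullet> (T *v h)))) = (\<lambda>h. 0)"
    using min by (intro differential_zero_maxmin[OF UNIV_I open_UNIV
          has_derivative_add[OF df has_derivative_mult_right[OF dn]]]) auto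
  from fun_cong[OF this, of h] show ?thesis
    by (simp add: inner_add_left dot_lmul_matrix)
qed

lemma regularized_minimizer_eq:
  fixes A :: "real^'d^'n" and f :: "real^'n \<Rightarrow> real"
  assumes "lam \<noteq> 0"
    and grad: "\<And>y. (f has_derivative (\<lambda>h. gradf y \<bullet> h)) (at y)"
    and min: "\<And>x'. f (A *v x) + lam / 2 * (norm x)^2 \<le> f (A *v x') + lam / 2 * (norm x')^2"
  shows "x = (- (1 / lam)) *\<^sub>R (transpose A *v gradf (A *v x))"
proof -
  let ?v = "transpose A *v gradf (A *v x)"
  have "(?v + lam *\<^sub>R x) \<bullet> (?v + lam *\<^sub>R x) = 0"
    using regularized_composite_stationary[of f gradf A "mat 1" x lam] grad min by simp
  then have "lam *\<^sub>R x = - ?v" by (simp add: eq_neg_iff_add_eq_0 add.commute)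
  then have "(1 / lam) *\<^sub>R (lam *\<^sub>R x) = (1 / lam) *\<^sub>R (- ?v)" by simp
  with \<open>lam \<noteq> 0\<close> show ?thesis by simp
qed

lemma sketched_gradient_gap_sq_le:
  fixes S :: "real^'m^'d" and u v :: "real^'d"
  assumes lam: "lam > 0"
    and sketch_opt: "\<And>h. (u + lam *\<^sub>R (S *v a)) \<bullet> (S *v h) = 0"
    and mono: "(u - v) \<bullet> (S *v a - (- (1 / lam)) *\<^sub>R v) \<ge> 0"
  shows "(norm (u - v))^2 \<le> norm (proj_perp S *v (u - v)) * norm u"
proof -
  define r where "r = u + lam *\<^sub>R (S *v a)"
  define w where "w = u - v"
  have "lam *\<^sub>R (S *v a - (- (1 / lam)) *\<^sub>R v) = r - w"
    using lam unfolding r_def w_def by (simp add: algebra_simps)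
  then have "w \<bullet> (r - w) = lam * (w \<bullet> (S *v a - (- (1 / lam)) *\<^sub>R v))"
    by (metis inner_scaleR_right)
  moreover have "lam * (w \<bullet> (S *v a - (- (1 / lam)) *\<^sub>R v)) \<ge> 0"
    using lam mono unfolding w_def by simp
  ultimately have "(norm w)^2 \<le> w \<bullet> r"
    by (simp add: power2_norm_eq_inner inner_diff_right)
  also have "w \<bullet> r = (proj_perp S *v w) \<bullet> r"
  proof -
    obtain y where w: "w = S *v y + proj_perp S *v w" using proj_perp_decomp by blast
    have "(S *v y) \<bullet> r = 0" using sketch_opt[of y] by (simp add: r_def inner_commute)
    have "w \<bullet> r = (S *v y + proj_perp S *v w) \<bullet> r"
      using w by (rule arg_cong[where f = "\<lambda>x. x \<bullet> r"])
    also have "\<dots> = (proj_perp S *v w) \<bullet> r"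
      using \<open>(S *v y) \<bullet> r = 0\<close> by (simp add: inner_add_left)
    finally show ?thesis .
  qed
  also have "\<dots> \<le> norm (proj_perp S *v w) * norm r" by (rule norm_cauchy_schwarz)
  also have "\<dots> \<le> norm (proj_perp S *v w) * norm u"
  proof -
    have "orthogonal r (- lam *\<^sub>R (S *v a))"
      using sketch_opt[of a] unfolding r_def by (simp add: orthogonal_def)
    from norm_add_Pythagorean[OF this]
    have "(norm r)^2 \<le> (norm u)^2" by (simp add: r_def)
    then have "norm r \<le> norm u" by (rule power2_le_imp_le) simp
    then show ?thesis by (rule mult_left_mono) simp
  qed
  finally show ?thesis unfolding w_def .
qed

lemma norm_proj_perp_gap_mult_le_Zf:
  fixes A :: "real^'d^'n"
  assumes "z1 \<in> fenchel_dom f" "norm z0 \<le> L" "norm z1 \<le> L"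
  shows "norm (proj_perp S *v (transpose A *v (z1 - z0))) * norm (transpose A *v z1)
           \<le> 2 * L^2 * (onorm (\<lambda>x. A *v x) * Zf f z0 A S)"
proof -
  have "norm (proj_perp S *v (transpose A *v (z1 - z0))) * norm (transpose A *v z1)
      \<le> (Zf f z0 A S * (2 * L)) * (onorm (\<lambda>x. A *v x) * L)"
  proof (rule mult_mono)
    have "norm (z1 - z0) \<le> 2 * L" using norm_triangle_ineq4[of z1 z0] assms(2,3) by linarith
    then show "norm (proj_perp S *v (transpose A *v (z1 - z0))) \<le> Zf f z0 A S * (2 * L)"
      using norm_proj_perp_le_Zf[OF assms(1)] by (meson Zf_nonneg mult_left_mono order_trans)
    show "norm (transpose A *v z1) \<le> onorm (\<lambda>x. A *v x) * L"
      using norm_transpose_mult_le_onorm[of A z1] assms(3)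
      by (meson onorm_pos_le matrix_vector_mul_bounded_linear mult_left_mono order_trans)
  qed (use assms(3) in \<open>simp_all add: Zf_nonneg order_trans[OF norm_ge_zero]\<close>)
  then show ?thesis by (simp add: power2_eq_square algebra_simps)
qed

theorem theorem4:
  fixes A :: "real^'d^'n" and S :: "real^'m^'d" and lam L :: real
    and f :: "real^'n \<Rightarrow> real" and gradf :: "real^'n \<Rightarrow> real^'n"
    and xs :: "real^'d" and as :: "real^'m"
  assumes lam_pos: "lam > 0"
    and convex: "convex_on UNIV f"
    and grad: "\<And>y. (f has_derivative (\<lambda>h. gradf y \<bullet> h)) (at y)"
    and lip: "L-lipschitz_on UNIV f"
    and xs_min: "\<And>x. f (A *v xs) + lam / 2 * (norm xs)^2 \<le> f (A *v x) + lam / 2 * (norm x)^2"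
    and as_min: "\<And>\<alpha>. f (A *v (S *v as)) + lam / 2 * (norm (S *v as))^2
                   \<le> f (A *v (S *v \<alpha>)) + lam / 2 * (norm (S *v \<alpha>))^2"
  shows "norm ((- (1 / lam)) *\<^sub>R (transpose A *v gradf (A *v (S *v as))) - xs)
           \<le> 6 * L / lam * sqrt (onorm (\<lambda>x. A *v x) * Zf f (gradf (A *v xs)) A S)"
proof -
  define z0 where "z0 = gradf (A *v xs)"
  define z1 where "z1 = gradf (A *v (S *v as))"
  define w where "w = transpose A *v (z1 - z0)"
  define \<sigma>Z where "\<sigma>Z = onorm (\<lambda>x. A *v x) * Zf f z0 A S"
  have "L \<ge> 0" and "\<sigma>Z \<ge> 0"
    using lip by (auto simp: lipschitz_on_def \<sigma>Z_def Zf_nonneg onorm_pos_le)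
  have xs_eq: "xs = (- (1 / lam)) *\<^sub>R (transpose A *v z0)"
    unfolding z0_def using lam_pos grad xs_min by (intro regularized_minimizer_eq) auto
  have "w \<bullet> (S *v as - xs) \<ge> 0"
    using convex_on_gradient_monotone[OF convex grad grad, of "A *v (S *v as)" "A *v xs"]
    unfolding w_def z0_def z1_def
    by (simp only: transpose_matrix_vector dot_lmul_matrix flip: matrix_vector_mult_diff_distrib)
  then have "(norm w)^2 \<le> norm (proj_perp S *v w) * norm (transpose A *v z1)"
    using sketched_gradient_gap_sq_le[OF lam_pos regularized_composite_stationary[OF grad as_min]]
    unfolding w_def z1_def xs_eq by (simp add: matrix_vector_mult_diff_distrib)
  also have "\<dots> \<le> 2 * L^2 * \<sigma>Z"
    unfolding w_def \<sigma>Z_def z0_def z1_def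
    by (intro norm_proj_perp_gap_mult_le_Zf convex_on_gradient_in_fenchel_dom[OF convex grad]
        convex_on_gradient_norm_le_lipschitz[OF convex grad lip])
  also have "\<dots> \<le> (6 * L * sqrt \<sigma>Z)^2"
    using \<open>\<sigma>Z \<ge> 0\<close> by (simp add: power_mult_distrib mult_right_mono)
  finally have "norm w \<le> 6 * L * sqrt \<sigma>Z"
    by (rule power2_le_imp_le) (simp add: \<open>L \<ge> 0\<close> \<open>\<sigma>Z \<ge> 0\<close>)
  moreover have "(- (1 / lam)) *\<^sub>R (transpose A *v z1) - xs = (- (1 / lam)) *\<^sub>R w"
    unfolding xs_eq w_def by (simp only: matrix_vector_mult_diff_distrib scaleR_diff_right)
  ultimately show ?thesis
    using lam_pos unfolding z0_def z1_def \<sigma>Z_def by (simp add: divide_right_mono)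
qed

end
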